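(* Let $n\ge 2$ be an integer that is not a perfect square, and let $a,b$ be positive integers with $a^2-nb^2=-1$. Put $u=a+b\sqrt n$, and let $H_j/K_j$ be the convergents of the simple continued fraction expansion of $u^2$, with $H_{-1}=1$. Then $$\mathcal L\left(\frac1{u^2}\right)=\sum_{k=0}^{\infty}\left[\mathcal L\left(\frac{1}{nb^2(2H_{2k-1})^2}\right)+\mathcal L\left(\frac{1}{(2H_{2k+1}-H_{2k})^2}\right)\right].$$
   Context: $\mathcal L$ is the Rogers dilogarithm: for real $z\le1$, $\mathcal L(z)=\mathrm{Li}_2(z)+\tfrac12\log|z|\log(1-z)$, where $\mathrm{Li}_2(z)=\sum_{m\ge1}z^m/m^2$. If $v=[c_0,c_1,c_2,\dots]$ is the simple continued fraction expansion of $v$ ($c_0=\lfloor v\rfloor$, $c_i\ge1$ integers), the convergent numerators are defined by $H_{-2}=0,H_{-1}=1$, $H_i=c_iH_{i-1}+H_{i-2}$ for $i\ge0$, and denominators by $K_{-2}=1,K_{-1}=0$, $K_i=c_iK_{i-1}+K_{i-2}$, so that $[c_0,\dots,c_i]=H_i/K_i$. *)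

theory Defs
  imports Complex_Main
begin

definition Li2 :: "real \<Rightarrow> real" where
  "Li2 z = (\<Sum>m. z ^ (Suc m) / (real (Suc m))\<^sup>2)"

definition rogers_L :: "real \<Rightarrow> real" where
  "rogers_L z = Li2 z + 1/2 * ln \<bar>z\<bar> * ln (1 - z)"

primrec cf_rem :: "real \<Rightarrow> nat \<Rightarrow> real" where
  "cf_rem v 0 = v"
| "cf_rem v (Suc i) = 1 / (cf_rem v i - of_int \<lfloor>cf_rem v i\<rfloor>)"

definition cf_coeff :: "real \<Rightarrow> nat \<Rightarrow> int" where
  "cf_coeff v i = \<lfloor>cf_rem v i\<rfloor>"

text \<open>Shifted numerators: cf_num_sh v j = H_{j-2}; H_{-2}=0, H_{-1}=1,
  H_i = c_i H_{i-1} + H_{i-2}.\<close>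
fun cf_num_sh :: "real \<Rightarrow> nat \<Rightarrow> int" where
  "cf_num_sh v 0 = 0"
| "cf_num_sh v (Suc 0) = 1"
| "cf_num_sh v (Suc (Suc i)) = cf_coeff v i * cf_num_sh v (Suc i) + cf_num_sh v i"

definition cf_H :: "real \<Rightarrow> int \<Rightarrow> int" where
  "cf_H v j = cf_num_sh v (nat (j + 2))"

end

theory Submission
  imports Defs "HOL-Real_Asymp.Real_Asymp"
begin

text \<open>
  Put \<open>F j = (u^j - u^-j) / (u - 1/u)\<close>. Thanks to Cassini's identity
  \<open>F j * F (j+2) = F (j+1)^2 - 1\<close>, Abel's five-term relation combined with the reflection
  formula \<open>L z + L (1 - z) = const\<close> gives \<open>L (1 / F (k+2)^2) = g (k+2) - g (k+1)\<close> for
  \<open>g j = L (F j / (u F (j+1))) - L (1 / (u^j F (j+1)))\<close>, and \<open>g j \<longrightarrow> L (1/u^2)\<close>. So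
  \<open>L (1/u^2) = (\<Sum>j\<ge>2. L (1 / F j^2))\<close>.

  If \<open>u = a + b sqrt n\<close> has norm \<open>-1\<close>, then \<open>v = u^2\<close> satisfies \<open>v + 1/v = T = 4 n b^2 - 2\<close>,
  so \<open>v = [T-1; 1, T-2, 1, T-2, ...]\<close> and its convergent numerators are \<open>H (2k-1) = F' (k+1)\<close>
  and \<open>H (2k) = F' (k+2) - F' (k+1)\<close>, where \<open>F'\<close> is the same sequence for \<open>v\<close>. The doubling
  formulas \<open>F (2j) = (u + 1/u) F' j\<close>, \<open>F (2j+1) = F' j + F' (j+1)\<close> and \<open>u + 1/u = 2 b sqrt n\<close>
  turn the pairs \<open>j = 2k+2, 2k+3\<close> of the series into the terms of the theorem.
\<close>

section \<open>The Rogers dilogarithm\<close>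

lemma summable_power_div_Suc:
  fixes x :: real
  assumes "\<bar>x\<bar> < 1"
  shows "summable (\<lambda>n. x ^ n / real (Suc n))"
proof (rule summable_comparison_test[of _ "\<lambda>n. \<bar>x\<bar> ^ n"])
  show "\<exists>N. \<forall>n\<ge>N. norm (x ^ n / real (Suc n)) \<le> \<bar>x\<bar> ^ n"
    by (auto simp: abs_mult power_abs divide_le_eq mult_le_cancel_left1)
  show "summable (\<lambda>n. \<bar>x\<bar> ^ n)"
    using assms by (simp add: summable_geometric)
qed

lemma suminf_power_div_Suc:
  fixes x :: real
  assumes "0 < x" "x < 1"
  shows "(\<Sum>n. x ^ n / real (Suc n)) = - ln (1 - x) / x"
proof -
  have "ln (1 - x) = (\<Sum>n. (-1) ^ n * (1 / real (n + 1)) * ((1 - x) - 1) ^ Suc n)"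
    using assms by (intro ln_series) auto
  also have "\<dots> = (\<Sum>n. - x * (x ^ n / real (Suc n)))"
    by (rule suminf_cong) (simp add: power_mult_distrib[symmetric] flip: power_minus)
  also have "\<dots> = - x * (\<Sum>n. x ^ n / real (Suc n))"
    using summable_power_div_Suc[of x] assms by (intro suminf_mult) auto
  finally show ?thesis
    using assms by (simp add: field_simps)
qed

lemma Li2_has_field_derivative:
  fixes x :: real
  assumes "\<bar>x\<bar> < 1"
  shows "(Li2 has_field_derivative (\<Sum>n. x ^ n / real (Suc n))) (at x)"
proof -
  have Li2_eq: "Li2 = (\<lambda>x. \<Sum>n. 1 / (real (Suc n))\<^sup>2 * x ^ Suc n)"
    by (simp add: Li2_def fun_eq_iff)
  have coeff: "1 / (real (Suc n))\<^sup>2 * real (Suc n) * y ^ n = y ^ n / real (Suc n)" for n y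
    by (simp add: power2_eq_square)
  have "((\<lambda>x. \<Sum>n. 1 / (real (Suc n))\<^sup>2 * x ^ Suc n) has_field_derivative
          (\<Sum>n. 1 / (real (Suc n))\<^sup>2 * real (Suc n) * x ^ n)) (at x)"
  proof (rule DERIV_power_series'[where R = 1])
    fix y :: real
    assume "y \<in> {-1<..<1}"
    then show "summable (\<lambda>n. 1 / (real (Suc n))\<^sup>2 * real (Suc n) * y ^ n)"
      unfolding coeff by (intro summable_power_div_Suc) auto
  qed (use assms in auto)
  then show ?thesis
    unfolding Li2_eq coeff .
qed

definition rogers_L_deriv :: "real \<Rightarrow> real" where
  "rogers_L_deriv z = - (ln (1 - z) / z + ln z / (1 - z)) / 2"

lemma rogers_L_has_field_derivative:
  fixes x :: real
  assumes "0 < x" "x < 1"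
  shows "(rogers_L has_field_derivative rogers_L_deriv x) (at x)"
proof -
  have "((\<lambda>z. Li2 z + 1/2 * ln z * ln (1 - z)) has_field_derivative rogers_L_deriv x) (at x)"
    using assms unfolding rogers_L_deriv_def
    by (auto intro!: derivative_eq_intros Li2_has_field_derivative[of x, unfolded suminf_power_div_Suc[OF assms]]
      simp: field_simps)
  then show ?thesis
    by (rule has_field_derivative_transform_within_open[where S = "{0<..}"])
       (use assms in \<open>auto simp: rogers_L_def\<close>)
qed

lemma rogers_L_0 [simp]: "rogers_L 0 = 0"
  by (simp add: rogers_L_def Li2_def)

lemma rogers_L_tendsto_0: "(rogers_L \<longlongrightarrow> 0) (at_right 0)"
proof -
  have "isCont Li2 0"
    using Li2_has_field_derivative[of 0] DERIV_isCont by auto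
  then have "(Li2 \<longlongrightarrow> 0) (at 0)"
    by (simp add: isCont_def Li2_def)
  then have "(Li2 \<longlongrightarrow> 0) (at_right 0)"
    by (rule tendsto_mono[OF at_le, rotated]) simp
  moreover have "((\<lambda>z::real. ln z * ln (1 - z)) \<longlongrightarrow> 0) (at_right 0)"
    by real_asymp
  ultimately have "((\<lambda>z. Li2 z + 1/2 * (ln z * ln (1 - z))) \<longlongrightarrow> 0 + 1/2 * 0) (at_right 0)"
    by (intro tendsto_intros)
  moreover have "\<forall>\<^sub>F z in at_right 0. Li2 z + 1/2 * (ln z * ln (1 - z)) = rogers_L z"
    by (rule eventually_mono[OF eventually_at_right_less]) (simp add: rogers_L_def)
  ultimately show ?thesis
    by (simp add: tendsto_cong)
qed

lemma continuous_on_rogers_L: "continuous_on {0..<1} rogers_L"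
  unfolding continuous_on_eq_continuous_within
proof
  fix x :: real
  assume x: "x \<in> {0..<1}"
  show "continuous (at x within {0..<1}) rogers_L"
  proof (cases "x = 0")
    case True
    have "at 0 within {0..<1} = at_right (0::real)"
      by (rule at_within_nhd[of _ "{..<1}"]) auto
    then show ?thesis
      using rogers_L_tendsto_0 True by (simp add: continuous_within)
  next
    case False
    then show ?thesis
      using x rogers_L_has_field_derivative[of x]
      by (auto intro: continuous_at_imp_continuous_at_within DERIV_isCont)
  qed
qed

lemma abel_arg_bounds:
  fixes t y :: real
  assumes "0 \<le> t" "t < 1" "0 \<le> y" "y < 1"
  shows "0 < 1 - t * y" "0 \<le> t * (1 - y) / (1 - t * y)" "t * (1 - y) / (1 - t * y) < 1"
proof -
  have "t * y < 1"
    using assms mult_strict_mono[of t 1 y 1] by (cases "t = 0") auto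
  then show "0 < 1 - t * y"
    by simp
  then show "0 \<le> t * (1 - y) / (1 - t * y)"
    using assms by simp
  have "t * (1 - y) \<le> t * (1 - t * y)"
    using assms by (intro mult_left_mono) (auto intro: mult_left_le_one_le)
  then have "t * (1 - y) / (1 - t * y) \<le> t"
    using \<open>0 < 1 - t * y\<close> by (simp add: divide_le_eq)
  then show "t * (1 - y) / (1 - t * y) < 1"
    using assms by linarith
qed

lemma abel_arg_in_unit_interval:
  fixes t y :: real
  assumes "0 < t" "t < 1" "0 < y" "y < 1"
  shows "t * (1 - y) / (1 - t * y) \<in> {0<..<1}"
  using abel_arg_bounds[of t y] assms by auto

text \<open>The \<open>x\<close>-derivative of the five-term relation below vanishes identically.\<close>

lemma rogers_L_deriv_five_term:
  fixes x y :: real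
  assumes x: "0 < x" "x < 1" and y: "0 < y" "y < 1"
  shows "rogers_L_deriv x - rogers_L_deriv (x * y) * y
         - rogers_L_deriv (x * (1 - y) / (1 - x * y)) * ((1 - y) / (1 - x * y)^2)
         - rogers_L_deriv (y * (1 - x) / (1 - x * y)) * (y * (y - 1) / (1 - x * y)^2) = 0"
proof -
  define P X Y where "P = 1 - x * y" and "X = 1 - x" and "Y = 1 - y"
  have pos: "0 < P" "0 < X" "0 < Y"
    using abel_arg_bounds[of x y] x y by (auto simp: P_def X_def Y_def)
  define A B C D E where "A = ln x" and "B = ln y" and "C = ln X" and "D = ln Y" and "E = ln P"
  have nz: "x \<noteq> 0" "y \<noteq> 0" "X \<noteq> 0" "Y \<noteq> 0" "P \<noteq> 0"
    using x y pos by auto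
  have e1: "1 - x * Y / P = X / P" and e2: "1 - y * X / P = Y / P"
    using pos by (simp_all add: field_simps P_def X_def Y_def)
  have l1: "ln (X / P) = C - E" and l2: "ln (Y / P) = D - E"
    using pos by (simp_all add: ln_div C_def D_def E_def)
  have l3: "ln (x * Y / P) = A + D - E" and l4: "ln (y * X / P) = B + C - E"
    using x y pos by (simp_all add: ln_div ln_mult A_def B_def C_def D_def E_def)
  have l5: "ln (x * y) = A + B"
    using x y by (simp add: ln_mult A_def B_def)
  have t1: "rogers_L_deriv x = - (C / x + A / X) / 2"
    by (simp add: rogers_L_deriv_def A_def C_def X_def)
  have t2: "rogers_L_deriv (x * y) * y = - (E / x + y * (A + B) / P) / 2"
    unfolding rogers_L_deriv_def l5 using nz by (simp add: field_simps E_def P_def)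
  have t3: "rogers_L_deriv (x * Y / P) * (Y / P^2) = - ((C - E) / (x * P) + (A + D - E) * Y / (X * P)) / 2"
    unfolding rogers_L_deriv_def e1 l1 l3 using nz by (simp add: field_simps power2_eq_square)
  have t4: "rogers_L_deriv (y * X / P) * (y * (- Y) / P^2) = ((D - E) * Y / (X * P) + y * (B + C - E) / P) / 2"
    unfolding rogers_L_deriv_def e2 l2 l4 using nz by (simp add: field_simps power2_eq_square)
  have "- (C / x + A / X) / 2 + (E / x + y * (A + B) / P) / 2
     + ((C - E) / (x * P) + (A + D - E) * Y / (X * P)) / 2
     - ((D - E) * Y / (X * P) + y * (B + C - E) / P) / 2 = 0"
    using nz by (simp add: field_simps) (simp add: algebra_simps P_def X_def Y_def)
  moreover have "y - 1 = - Y"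
    by (simp add: Y_def)
  ultimately show ?thesis
    unfolding P_def[symmetric] X_def[symmetric] Y_def[symmetric] \<open>y - 1 = - Y\<close> t1 t2 t3 t4
    by linarith
qed

lemma rogers_L_five_term:
  fixes x y :: real
  assumes x: "0 < x" "x < 1" and y: "0 < y" "y < 1"
  shows "rogers_L x + rogers_L y = rogers_L (x * y) + rogers_L (x * (1 - y) / (1 - x * y))
           + rogers_L (y * (1 - x) / (1 - x * y))"
proof -
  define G where "G t = rogers_L t + rogers_L y - rogers_L (t * y)
      - rogers_L (t * (1 - y) / (1 - t * y)) - rogers_L (y * (1 - t) / (1 - t * y))" for t
  have in_Ico: "t \<in> {0..<1}" "t * y \<in> {0..<1}" "t * (1 - y) / (1 - t * y) \<in> {0..<1}"
      "y * (1 - t) / (1 - t * y) \<in> {0..<1}" "1 - t * y \<noteq> 0" if "t \<in> {0..x}" for t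
    using that x y abel_arg_bounds[of t y] abel_arg_bounds[of y t] mult_left_le_one_le[of y t]
    by (auto simp: mult.commute)
  have "continuous_on {0..x} G"
    unfolding G_def
    by (intro continuous_intros continuous_on_compose2[OF continuous_on_rogers_L])
       (use in_Ico in auto)
  moreover have "(G has_field_derivative 0) (at t)" if t: "0 < t" "t < x" for t
  proof -
    have t1: "0 < t" "t < 1"
      using t x by auto
    have "t * y \<in> {0<..<1}"
      using t1 y mult_strict_mono[of t 1 y 1] by auto
    moreover have "t * (1 - y) / (1 - t * y) \<in> {0<..<1}" "y * (1 - t) / (1 - t * y) \<in> {0<..<1}"
      using abel_arg_in_unit_interval[OF t1 y] abel_arg_in_unit_interval[OF y t1]
      by (auto simp: mult.commute)
    moreover have "0 < 1 - t * y"
      using abel_arg_bounds[of t y] t1 y by auto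
    ultimately have "(G has_field_derivative rogers_L_deriv t - rogers_L_deriv (t * y) * y
        - rogers_L_deriv (t * (1 - y) / (1 - t * y)) * ((1 - y) / (1 - t * y)^2)
        - rogers_L_deriv (y * (1 - t) / (1 - t * y)) * (y * (y - 1) / (1 - t * y)^2)) (at t)"
      unfolding G_def using t1
      by (auto intro!: derivative_eq_intros rogers_L_has_field_derivative[THEN DERIV_chain2]
               simp: field_simps power2_eq_square)
    then show ?thesis
      using rogers_L_deriv_five_term[OF t1 y] by simp
  qed
  ultimately have "G x = G 0"
    using x by (intro DERIV_isconst_end) auto
  then show ?thesis
    by (simp add: G_def)
qed

lemma rogers_L_reflection:
  fixes z w :: real
  assumes "0 < z" "z < 1" "0 < w" "w < 1"
  shows "rogers_L z + rogers_L (1 - z) = rogers_L w + rogers_L (1 - w)"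
proof (rule DERIV_isconst3[where f = "\<lambda>t. rogers_L t + rogers_L (1 - t)"])
  fix t :: real
  assume "t \<in> {0<..<1}"
  then have "((\<lambda>t. rogers_L t + rogers_L (1 - t)) has_field_derivative
      rogers_L_deriv t - rogers_L_deriv (1 - t)) (at t)"
    by (auto intro!: derivative_eq_intros rogers_L_has_field_derivative[THEN DERIV_chain2])
  then show "((\<lambda>t. rogers_L t + rogers_L (1 - t)) has_field_derivative 0) (at t)"
    by (simp add: rogers_L_deriv_def add.commute)
qed (use assms in auto)

section \<open>Lucas sequences\<close>

definition lucas_U :: "real \<Rightarrow> nat \<Rightarrow> real" where
  "lucas_U s j = (s ^ j - 1 / s ^ j) / (s - 1 / s)"

lemma lucas_U_0 [simp]: "lucas_U s 0 = 0"
  by (simp add: lucas_U_def)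

context
  fixes s :: real
  assumes nondegenerate: "s - 1 / s \<noteq> 0"
begin

lemma lucas_U_base_nonzero: "s \<noteq> 0"
  using nondegenerate by auto

lemma lucas_U_mult_diff: "lucas_U s j * (s - 1 / s) = s ^ j - 1 / s ^ j"
  using nondegenerate by (simp add: lucas_U_def)

lemma lucas_U_1 [simp]: "lucas_U s 1 = 1"
  using nondegenerate by (simp add: lucas_U_def)

lemma lucas_U_Suc_sub: "s * lucas_U s (Suc j) - lucas_U s j = s ^ Suc j"
proof -
  have "(s * lucas_U s (Suc j) - lucas_U s j) * (s - 1 / s)
      = s * (s ^ Suc j - 1 / s ^ Suc j) - (s ^ j - 1 / s ^ j)"
    by (simp add: left_diff_distrib lucas_U_mult_diff flip: mult.assoc)
  also have "\<dots> = s ^ Suc j * (s - 1 / s)"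
    using lucas_U_base_nonzero by (simp add: field_simps)
  finally show ?thesis
    using nondegenerate by (metis mult_right_cancel)
qed

lemma lucas_U_Suc_sub': "lucas_U s (Suc j) - s * lucas_U s j = 1 / s ^ j"
proof -
  have "(lucas_U s (Suc j) - s * lucas_U s j) * (s - 1 / s)
      = (s ^ Suc j - 1 / s ^ Suc j) - s * (s ^ j - 1 / s ^ j)"
    by (simp add: left_diff_distrib lucas_U_mult_diff flip: mult.assoc)
  also have "\<dots> = 1 / s ^ j * (s - 1 / s)"
    using lucas_U_base_nonzero by (simp add: field_simps)
  finally show ?thesis
    using nondegenerate by (metis mult_right_cancel)
qed

lemma lucas_U_Cassini: "lucas_U s j * lucas_U s (j + 2) = (lucas_U s (j + 1))\<^sup>2 - 1"
proof -
  have "lucas_U s j * lucas_U s (j + 2) * (s - 1 / s)\<^sup>2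
      = (lucas_U s j * (s - 1 / s)) * (lucas_U s (j + 2) * (s - 1 / s))"
    by (simp add: power2_eq_square algebra_simps)
  also have "\<dots> = (s ^ j - 1 / s ^ j) * (s ^ (j + 2) - 1 / s ^ (j + 2))"
    by (simp only: lucas_U_mult_diff)
  also have "\<dots> = (s ^ (j + 1) - 1 / s ^ (j + 1))\<^sup>2 - (s - 1 / s)\<^sup>2"
    using lucas_U_base_nonzero by (simp add: field_simps power2_eq_square)
  also have "\<dots> = (lucas_U s (j + 1) * (s - 1 / s))\<^sup>2 - (s - 1 / s)\<^sup>2"
    by (simp only: lucas_U_mult_diff)
  also have "\<dots> = ((lucas_U s (j + 1))\<^sup>2 - 1) * (s - 1 / s)\<^sup>2"
    by (simp add: algebra_simps power2_eq_square)
  finally show ?thesis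
    using nondegenerate by (metis mult_right_cancel power_not_zero)
qed

lemma lucas_U_rec: "lucas_U s (j + 2) = (s + 1 / s) * lucas_U s (j + 1) - lucas_U s j"
proof -
  have "lucas_U s (j + 2) * (s - 1 / s) = s ^ (j + 2) - 1 / s ^ (j + 2)"
    by (rule lucas_U_mult_diff)
  also have "\<dots> = (s + 1 / s) * (s ^ (j + 1) - 1 / s ^ (j + 1)) - (s ^ j - 1 / s ^ j)"
    using lucas_U_base_nonzero by (simp add: field_simps)
  also have "\<dots> = ((s + 1 / s) * lucas_U s (j + 1) - lucas_U s j) * (s - 1 / s)"
    by (simp add: left_diff_distrib lucas_U_mult_diff flip: mult.assoc)
  finally show ?thesis
    using nondegenerate by (metis mult_right_cancel)
qed

end

lemma sub_inverse_pos: "1 < s \<Longrightarrow> 0 < s - 1 / (s::real)"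
  using less_1_mult[of s s] by (simp add: field_simps)

lemma lucas_U_Suc_ge_1:
  assumes "1 < s"
  shows "1 \<le> lucas_U s (Suc j)"
proof (induction j)
  case 0
  then show ?case
    using lucas_U_1[of s] sub_inverse_pos[OF assms] by simp
next
  case (Suc j)
  have "lucas_U s (Suc (Suc j)) = s * lucas_U s (Suc j) + 1 / s ^ Suc j"
    using lucas_U_Suc_sub'[of s "Suc j"] sub_inverse_pos[OF assms] by simp
  moreover have "lucas_U s (Suc j) \<le> s * lucas_U s (Suc j)"
    using Suc assms by simp
  moreover have "0 < 1 / s ^ Suc j"
    using assms by simp
  ultimately show ?case
    using Suc by linarith
qed

lemma lucas_U_Suc_Suc_gt_1:
  assumes "1 < s"
  shows "1 < lucas_U s (Suc (Suc j))"
proof -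
  have "lucas_U s (Suc (Suc j)) = s * lucas_U s (Suc j) + 1 / s ^ Suc j"
    using lucas_U_Suc_sub'[of s "Suc j"] sub_inverse_pos[OF assms] by simp
  moreover have "1 < s * lucas_U s (Suc j)"
    using less_1_mult'[OF assms lucas_U_Suc_ge_1[OF assms]] .
  moreover have "0 < 1 / s ^ Suc j"
    using assms by simp
  ultimately show ?thesis
    by linarith
qed

lemma lucas_U_double:
  assumes "1 < s"
  shows "lucas_U s (2 * j) = (s + 1 / s) * lucas_U (s\<^sup>2) j"
    and "lucas_U s (2 * j + 1) = lucas_U (s\<^sup>2) j + lucas_U (s\<^sup>2) (j + 1)"
proof -
  have "0 < s" "0 < s - 1 / s" "0 < s + 1 / s"
    using assms less_1_mult[of s s] by (auto simp: field_simps)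
  then have factor: "s\<^sup>2 - 1 / s\<^sup>2 = (s + 1 / s) * (s - 1 / s)"
    by (simp add: field_simps power2_eq_square)
  define p where "p = s ^ j"
  have p: "0 < p" "s ^ (2 * j) = p\<^sup>2" "(s\<^sup>2) ^ j = p\<^sup>2"
    using \<open>0 < s\<close> by (simp_all add: p_def mult.commute flip: power_mult)
  show "lucas_U s (2 * j) = (s + 1 / s) * lucas_U (s\<^sup>2) j"
    using \<open>0 < s + 1 / s\<close> by (simp add: lucas_U_def factor p)
  have numerator:
    "(s * p\<^sup>2 - 1 / (s * p\<^sup>2)) * (s + 1 / s) = (p\<^sup>2 - 1 / p\<^sup>2) + (s\<^sup>2 * p\<^sup>2 - 1 / (s\<^sup>2 * p\<^sup>2))"
    using \<open>0 < s\<close> p by (simp add: field_simps power2_eq_square)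
  then have "lucas_U s (2 * j + 1) = ((p\<^sup>2 - 1 / p\<^sup>2) + (s\<^sup>2 * p\<^sup>2 - 1 / (s\<^sup>2 * p\<^sup>2))) / (s\<^sup>2 - 1 / s\<^sup>2)"
    using \<open>0 < s + 1 / s\<close> by (simp add: lucas_U_def factor p flip: numerator)
  then show "lucas_U s (2 * j + 1) = lucas_U (s\<^sup>2) j + lucas_U (s\<^sup>2) (j + 1)"
    by (simp add: lucas_U_def p power_mult_distrib add_divide_distrib)
qed

section \<open>The telescoping series\<close>

lemma five_term_arguments:
  fixes s a b c P :: real
  assumes s: "1 < s" and P1: "1 \<le> P" and b1: "1 < b" and c_pos: "0 < c"
    and Cassini: "a * c = b\<^sup>2 - 1"
    and ab: "s * b - a = s * P" and bc: "s * c - b = s * s * P" and ba: "b - s * a = 1 / P"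
  defines "x \<equiv> b / (s * c)" and "y \<equiv> 1 - 1 / b\<^sup>2"
  shows "x \<in> {0<..<1}" "y \<in> {0<..<1}" "x * y = a / (s * b)"
    "x * (1 - y) / (1 - x * y) = 1 / (s * P * c)" "y * (1 - x) / (1 - x * y) = 1 - 1 / (P * b)"
proof -
  have "0 < s * s * P"
    using s P1 by simp
  then have "b < s * c"
    using bc by linarith
  then show "x \<in> {0<..<1}"
    using b1 c_pos s by (simp add: x_def)
  show "y \<in> {0<..<1}"
    using b1 by (simp add: y_def)
  have y_eq: "y = a * c / b\<^sup>2"
    using Cassini b1 by (simp add: y_def field_simps)
  show xy: "x * y = a / (s * b)"
    using b1 c_pos s by (simp add: x_def y_eq field_simps power2_eq_square)
  have "1 - x * y = (s * b - a) / (s * b)"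
    using b1 s by (simp add: xy field_simps)
  then have one_sub_xy: "1 - x * y = P / b"
    using b1 s by (simp add: ab)
  have "1 - x = (s * c - b) / (s * c)"
    using c_pos s by (simp add: x_def field_simps)
  then have one_sub_x: "1 - x = s * P / c"
    using c_pos s by (simp add: bc)
  have "x * (1 - y) = 1 / (s * c * b)"
    using b1 c_pos s by (simp add: x_def y_def field_simps power2_eq_square)
  then show "x * (1 - y) / (1 - x * y) = 1 / (s * P * c)"
    using b1 c_pos s P1 by (simp add: one_sub_xy field_simps)
  have "y * (1 - x) = s * a * P / b\<^sup>2"
    using c_pos by (simp add: y_eq one_sub_x field_simps)
  then have "y * (1 - x) / (1 - x * y) = s * a / b"
    using b1 P1 by (simp add: one_sub_xy field_simps power2_eq_square)
  also have "\<dots> = 1 - 1 / (P * b)"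
  proof -
    have "s * a = b - 1 / P"
      using ba by simp
    then show ?thesis
      using b1 by (simp add: diff_divide_distrib mult.commute)
  qed
  finally show "y * (1 - x) / (1 - x * y) = 1 - 1 / (P * b)" .
qed

lemma rogers_L_five_term_lucas:
  fixes s :: real and k :: nat
  assumes s: "1 < s"
  defines "a \<equiv> lucas_U s (k + 1)" and "b \<equiv> lucas_U s (k + 2)" and "c \<equiv> lucas_U s (k + 3)"
      and "P \<equiv> s ^ (k + 1)"
  shows "rogers_L (b / (s * c)) + rogers_L (1 - 1 / b\<^sup>2)
       = rogers_L (a / (s * b)) + rogers_L (1 / (s * P * c)) + rogers_L (1 - 1 / (P * b))"
proof -
  have nondeg: "s - 1 / s \<noteq> 0"
    using sub_inverse_pos[OF s] by simp
  have "a * c = b\<^sup>2 - 1"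
    using lucas_U_Cassini[OF nondeg, of "k + 1"] by (simp add: a_def b_def c_def numeral_3_eq_3)
  moreover have "s * b - a = s * P" "s * c - b = s * s * P"
    using lucas_U_Suc_sub[OF nondeg, of "k + 1"] lucas_U_Suc_sub[OF nondeg, of "k + 2"]
    by (simp_all add: a_def b_def c_def P_def numeral_3_eq_3)
  moreover have "b - s * a = 1 / P"
    using lucas_U_Suc_sub'[OF nondeg, of "k + 1"] by (simp add: a_def b_def P_def)
  moreover have "1 \<le> P"
    unfolding P_def using s by (intro one_le_power) simp
  moreover have "1 < b" "0 < c"
    using lucas_U_Suc_Suc_gt_1[OF s, of k] lucas_U_Suc_ge_1[OF s, of "k + 2"]
    by (simp_all add: b_def c_def numeral_3_eq_3)
  ultimately show ?thesis
    using five_term_arguments[OF s] rogers_L_five_term[of "b / (s * c)" "1 - 1 / b\<^sup>2"] by simp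
qed

definition rogers_lucas_tail :: "real \<Rightarrow> nat \<Rightarrow> real" where
  "rogers_lucas_tail s j =
     rogers_L (lucas_U s j / (s * lucas_U s (j + 1))) - rogers_L (1 / (s ^ j * lucas_U s (j + 1)))"

lemma rogers_L_lucas_telescope:
  fixes s :: real
  assumes s: "1 < s"
  shows "rogers_L (1 / (lucas_U s (k + 2))\<^sup>2)
         = rogers_lucas_tail s (k + 2) - rogers_lucas_tail s (k + 1)"
proof -
  define b P where "b = lucas_U s (k + 2)" and "P = s ^ (k + 1)"
  define r where "r = 1 / (P * b)"
  have b1: "1 < b"
    using lucas_U_Suc_Suc_gt_1[OF s, of k] by (simp add: b_def)
  have "1 \<le> P"
    unfolding P_def using s by (intro one_le_power) simp
  then have "1 < P * b"
    using less_1_mult'[OF b1] by (simp add: mult.commute)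
  then have r: "0 < r" "r < 1"
    by (simp_all add: r_def)
  have "rogers_L (1 - 1 / b\<^sup>2) + rogers_L (1 / b\<^sup>2) = rogers_L (1 - r) + rogers_L r"
    using rogers_L_reflection[of "1 - 1 / b\<^sup>2" "1 - r"] b1 r by simp
  then show ?thesis
    using rogers_L_five_term_lucas[OF s, of k]
    by (simp add: rogers_lucas_tail_def b_def P_def r_def numeral_3_eq_3 mult.assoc)
qed

lemma lucas_U_ratios_closed_form:
  fixes s :: real
  assumes s: "1 < s"
  shows "lucas_U s j / (s * lucas_U s (j + 1)) = (1 - (1 / s\<^sup>2) ^ j) / (s\<^sup>2 - (1 / s\<^sup>2) ^ j)"
    and "1 / (s ^ j * lucas_U s (j + 1)) = (s - 1 / s) * (1 / s\<^sup>2) ^ j / (s - (1 / s\<^sup>2) ^ j / s)"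
proof -
  define p where "p = s ^ j"
  have p: "1 \<le> p" "(1 / s\<^sup>2) ^ j = 1 / p\<^sup>2"
    using s by (simp_all add: p_def one_le_power power_one_over flip: power_mult_distrib power_mult)
  have "0 < s - 1 / s" "1 < s * s"
    using sub_inverse_pos[OF s] less_1_mult[OF s s] by simp_all
  moreover have "1 \<le> p * p"
    using p less_1_mult[of p p] by (cases "p = 1") auto
  moreover have "1 < p * (p * (s * s))"
    using mult_right_mono[of 1 "p * p" "s * s"] \<open>1 \<le> p * p\<close> \<open>1 < s * s\<close> by (simp add: mult.assoc)
  ultimately have nz: "s - 1 / s \<noteq> 0" "s\<^sup>2 - 1 / p\<^sup>2 \<noteq> 0" "s - 1 / p\<^sup>2 / s \<noteq> 0" "p \<noteq> 0" "s \<noteq> 0"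
    using p s by (auto simp: field_simps power2_eq_square)
  show "lucas_U s j / (s * lucas_U s (j + 1)) = (1 - (1 / s\<^sup>2) ^ j) / (s\<^sup>2 - (1 / s\<^sup>2) ^ j)"
    using nz by (simp add: lucas_U_def p flip: p_def) (simp add: field_simps power2_eq_square)
  show "1 / (s ^ j * lucas_U s (j + 1)) = (s - 1 / s) * (1 / s\<^sup>2) ^ j / (s - (1 / s\<^sup>2) ^ j / s)"
    using nz by (simp add: lucas_U_def p flip: p_def) (simp add: field_simps power2_eq_square)
qed

lemma rogers_lucas_tail_tendsto:
  fixes s :: real
  assumes s: "1 < s"
  shows "rogers_lucas_tail s \<longlonglongrightarrow> rogers_L (1 / s\<^sup>2)"
proof -
  have q: "(\<lambda>j. (1 / s\<^sup>2) ^ j) \<longlonglongrightarrow> 0"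
    using s by (intro LIMSEQ_power_zero) (simp add: power_one_over one_less_power)
  have "1 < s\<^sup>2"
    using s by (simp add: one_less_power)
  have "(\<lambda>j. (1 - (1 / s\<^sup>2) ^ j) / (s\<^sup>2 - (1 / s\<^sup>2) ^ j)) \<longlonglongrightarrow> (1 - 0) / (s\<^sup>2 - 0)"
    using \<open>1 < s\<^sup>2\<close> s by (intro tendsto_divide tendsto_diff tendsto_const q) simp_all
  then have ratio: "(\<lambda>j. lucas_U s j / (s * lucas_U s (j + 1))) \<longlonglongrightarrow> 1 / s\<^sup>2"
    unfolding lucas_U_ratios_closed_form[OF s] by simp
  have "(\<lambda>j. (s - 1 / s) * (1 / s\<^sup>2) ^ j / (s - (1 / s\<^sup>2) ^ j / s)) \<longlonglongrightarrow> (s - 1 / s) * 0 / (s - 0 / s)"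
    using s by (intro tendsto_divide tendsto_diff tendsto_mult tendsto_const q) simp_all
  then have inverse: "(\<lambda>j. 1 / (s ^ j * lucas_U s (j + 1))) \<longlonglongrightarrow> 0"
    unfolding lucas_U_ratios_closed_form[OF s] by simp
  have ratio_range: "lucas_U s j / (s * lucas_U s (j + 1)) \<in> {0..<1}" for j
  proof -
    have "0 \<le> lucas_U s j"
      using lucas_U_Suc_ge_1[OF s, of "j - 1"] by (cases j) auto
    moreover have "0 < s ^ Suc j"
      using s by simp
    then have "lucas_U s j < s * lucas_U s (Suc j)"
      using lucas_U_Suc_sub[of s j] sub_inverse_pos[OF s] by simp
    moreover have "0 < s * lucas_U s (Suc j)"
      using lucas_U_Suc_ge_1[OF s, of j] s by simp
    ultimately show ?thesis
      by (simp add: divide_less_eq)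
  qed
  have inverse_range: "1 / (s ^ j * lucas_U s (j + 1)) \<in> {0..<1}" if "1 \<le> j" for j
  proof -
    have "1 < s ^ j" "1 \<le> lucas_U s (Suc j)"
      using s that lucas_U_Suc_ge_1[OF s] by (simp_all add: one_less_power)
    then have "1 < s ^ j * lucas_U s (Suc j)"
      by (rule less_1_mult')
    then show ?thesis
      by simp
  qed
  have "(\<lambda>j. rogers_L (lucas_U s j / (s * lucas_U s (j + 1)))) \<longlonglongrightarrow> rogers_L (1 / s\<^sup>2)"
  proof (rule continuous_on_tendsto_compose[OF continuous_on_rogers_L ratio])
    show "1 / s\<^sup>2 \<in> {0..<1}"
      using \<open>1 < s\<^sup>2\<close> by (simp add: divide_less_eq_1)
  qed (intro always_eventually allI ratio_range)
  moreover have "(\<lambda>j. rogers_L (1 / (s ^ j * lucas_U s (j + 1)))) \<longlonglongrightarrow> rogers_L 0"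
    using inverse_range
    by (intro continuous_on_tendsto_compose[OF continuous_on_rogers_L inverse])
       (auto simp: eventually_sequentially)
  ultimately have "(\<lambda>j. rogers_L (lucas_U s j / (s * lucas_U s (j + 1)))
      - rogers_L (1 / (s ^ j * lucas_U s (j + 1)))) \<longlonglongrightarrow> rogers_L (1 / s\<^sup>2) - rogers_L 0"
    by (rule tendsto_diff)
  then show ?thesis
    by (simp add: rogers_lucas_tail_def[abs_def])
qed

lemma rogers_L_lucas_sums:
  fixes s :: real
  assumes s: "1 < s"
  shows "(\<lambda>k. rogers_L (1 / (lucas_U s (k + 2))\<^sup>2)) sums rogers_L (1 / s\<^sup>2)"
proof -
  have "(\<lambda>k. rogers_lucas_tail s (Suc k)) \<longlonglongrightarrow> rogers_L (1 / s\<^sup>2)"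
    using rogers_lucas_tail_tendsto[OF s] by (rule LIMSEQ_Suc)
  then have "(\<lambda>k. rogers_lucas_tail s (Suc (Suc k)) - rogers_lucas_tail s (Suc k))
      sums (rogers_L (1 / s\<^sup>2) - rogers_lucas_tail s 1)"
    using telescope_sums by fastforce
  moreover have "rogers_lucas_tail s 1 = 0"
    using lucas_U_1[of s] sub_inverse_pos[OF s] by (simp add: rogers_lucas_tail_def)
  ultimately show ?thesis
    using rogers_L_lucas_telescope[OF s] by simp
qed

lemma rogers_L_lucas_sums_pairs:
  fixes s :: real
  assumes "1 < s"
  shows "(\<lambda>k. rogers_L (1 / (lucas_U s (2 * k + 2))\<^sup>2) + rogers_L (1 / (lucas_U s (2 * k + 3))\<^sup>2))
    sums rogers_L (1 / s\<^sup>2)"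
proof -
  have "(\<lambda>k. \<Sum>i\<in>{k * 2..<k * 2 + 2}. rogers_L (1 / (lucas_U s (i + 2))\<^sup>2)) sums rogers_L (1 / s\<^sup>2)"
    using rogers_L_lucas_sums[OF assms] by (rule sums_group) simp
  then show ?thesis
    by (simp add: numeral_3_eq_3 mult.commute)
qed

section \<open>The continued fraction of \<open>v\<close> with \<open>v + 1/v \<in> \<int>\<close>\<close>

lemma second_order_recurrence_unique:
  fixes f g :: "nat \<Rightarrow> 'a::comm_ring"
  assumes "f 0 = g 0" "f 1 = g 1"
    and "\<And>j. f (j + 2) = p * f (j + 1) - f j" "\<And>j. g (j + 2) = p * g (j + 1) - g j"
  shows "f j = g j"
proof (induction j rule: induct_nat_012)
  case (ge2 j)
  then show ?case
    using assms(3,4)[of j] by simp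
qed (use assms in simp_all)

lemma cf_num_sh_rec: "cf_num_sh v (j + 2) = cf_coeff v j * cf_num_sh v (j + 1) + cf_num_sh v j"
  using cf_num_sh.simps(3)[of v j] by (simp only: Suc_eq_plus1 add.assoc one_add_one)

context
  fixes v :: real and T :: int
  assumes v_gt_2: "2 < v" and v_add_inverse: "v + 1 / v = of_int T"
begin

lemma floor_self_reciprocal:
  "\<lfloor>v\<rfloor> = T - 1" "\<lfloor>v / (v - 1)\<rfloor> = 1" "\<lfloor>v - 1\<rfloor> = T - 2"
proof -
  have "0 < 1 / v" "1 / v < 1"
    using v_gt_2 by simp_all
  then have "of_int T - 1 < v" "v < of_int T"
    using v_add_inverse by linarith+
  then show "\<lfloor>v\<rfloor> = T - 1" "\<lfloor>v - 1\<rfloor> = T - 2"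
    by (intro floor_unique; simp)+
  have "1 \<le> v / (v - 1)" "v / (v - 1) < 2"
    using v_gt_2 by (simp_all add: le_divide_eq divide_less_eq)
  then show "\<lfloor>v / (v - 1)\<rfloor> = 1"
    by (intro floor_unique) simp_all
qed

lemma cf_rem_self_reciprocal:
  "cf_rem v (2 * i + 1) = v / (v - 1) \<and> cf_rem v (2 * i + 2) = v - 1"
proof -
  define step where "step x = 1 / (x - of_int \<lfloor>x\<rfloor>)" for x :: real
  have rem_Suc: "cf_rem v (Suc j) = step (cf_rem v j)" for j
    by (simp add: step_def)
  have "v - of_int \<lfloor>v\<rfloor> = 1 - 1 / v" "(v - 1) - of_int \<lfloor>v - 1\<rfloor> = 1 - 1 / v"
    by (simp_all add: floor_self_reciprocal flip: v_add_inverse)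
  moreover have "1 / (1 - 1 / v) = v / (v - 1)"
    using v_gt_2 by (simp add: field_simps)
  ultimately have step_v: "step v = v / (v - 1)" and step_v1: "step (v - 1) = v / (v - 1)"
    by (simp_all add: step_def)
  have step_ratio: "step (v / (v - 1)) = v - 1"
    using v_gt_2 by (simp add: step_def floor_self_reciprocal field_simps)
  show ?thesis
    by (induction i) (simp_all del: cf_rem.simps(2) add: rem_Suc step_v step_v1 step_ratio)
qed

lemma cf_coeff_self_reciprocal:
  "cf_coeff v 0 = T - 1" "cf_coeff v (2 * i + 1) = 1" "cf_coeff v (2 * i + 2) = T - 2"
  unfolding cf_coeff_def cf_rem_self_reciprocal[THEN conjunct1] cf_rem_self_reciprocal[THEN conjunct2]
  by (simp_all add: floor_self_reciprocal)

lemma cf_num_sh_even_self_reciprocal: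
  "cf_num_sh v (2 * k + 2) = cf_num_sh v (2 * k + 3) - cf_num_sh v (2 * k + 1)"
  using cf_num_sh_rec[of v "2 * k + 1"] cf_coeff_self_reciprocal(2)[of k]
  by (simp add: numeral_3_eq_3 del: cf_num_sh.simps(3))

lemma cf_num_sh_odd_self_reciprocal: "real_of_int (cf_num_sh v (2 * k + 1)) = lucas_U v (k + 1)"
proof (rule second_order_recurrence_unique[where p = "of_int T" and j = k and
    f = "\<lambda>i. real_of_int (cf_num_sh v (2 * i + 1))" and g = "\<lambda>i. lucas_U v (i + 1)"])
  have nondeg: "v - 1 / v \<noteq> 0"
    using sub_inverse_pos[of v] v_gt_2 by simp
  have "cf_num_sh v 3 = T"
    using cf_num_sh_rec[of v 0] cf_num_sh_rec[of v 1] cf_coeff_self_reciprocal(1) cf_coeff_self_reciprocal(2)[of 0]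
    by (simp add: numeral_3_eq_3 del: cf_num_sh.simps(3))
  moreover have "lucas_U v 2 = of_int T"
    using lucas_U_rec[OF nondeg, of 0] lucas_U_1[OF nondeg] by (simp add: v_add_inverse numeral_2_eq_2)
  moreover have "2 * 1 + 1 = (3::nat)" "1 + 1 = (2::nat)"
    by simp_all
  ultimately show "real_of_int (cf_num_sh v (2 * 1 + 1)) = lucas_U v (1 + 1)"
    by (simp only:)
  show "real_of_int (cf_num_sh v (2 * 0 + 1)) = lucas_U v (0 + 1)"
    using lucas_U_1[OF nondeg] by simp
  show "lucas_U v (j + 2 + 1) = of_int T * lucas_U v (j + 1 + 1) - lucas_U v (j + 1)" for j
    using lucas_U_rec[OF nondeg, of "j + 1"] by (simp add: v_add_inverse)
  show "real_of_int (cf_num_sh v (2 * (j + 2) + 1))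
      = of_int T * real_of_int (cf_num_sh v (2 * (j + 1) + 1)) - real_of_int (cf_num_sh v (2 * j + 1))" for j
  proof -
    have idx: "2 * (j + 1) + 1 = 2 * j + 3" "2 * (j + 2) + 1 = 2 * j + 5"
        "2 * j + 3 + 1 = 2 * j + 4" "2 * j + 3 + 2 = 2 * j + 5"
        "2 * j + 2 + 1 = 2 * j + 3" "2 * j + 2 + 2 = 2 * j + 4"
      by simp_all
    have "cf_num_sh v (2 * j + 5) = cf_num_sh v (2 * j + 4) + cf_num_sh v (2 * j + 3)"
      using cf_num_sh_rec[of v "2 * j + 3", unfolded idx]
        cf_coeff_self_reciprocal(2)[of "j + 1", unfolded idx] by simp
    moreover have "cf_num_sh v (2 * j + 4) = (T - 2) * cf_num_sh v (2 * j + 3) + cf_num_sh v (2 * j + 2)"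
      using cf_num_sh_rec[of v "2 * j + 2", unfolded idx] cf_coeff_self_reciprocal(3)[of j] by simp
    ultimately have "cf_num_sh v (2 * j + 5) = T * cf_num_sh v (2 * j + 3) - cf_num_sh v (2 * j + 1)"
      using cf_num_sh_even_self_reciprocal[of j] by (simp add: algebra_simps del: cf_num_sh.simps(3))
    then show ?thesis
      unfolding idx by (simp only: of_int_diff of_int_mult)
  qed
qed

lemma cf_H_self_reciprocal:
  "real_of_int (cf_H v (2 * int k - 1)) = lucas_U v (k + 1)"
  "real_of_int (cf_H v (2 * int k + 1)) = lucas_U v (k + 2)"
  "real_of_int (cf_H v (2 * int k)) = lucas_U v (k + 2) - lucas_U v (k + 1)"
proof -
  have idx: "nat (2 * int k - 1 + 2) = 2 * k + 1" "nat (2 * int k + 1 + 2) = 2 * (k + 1) + 1"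
      "nat (2 * int k + 2) = 2 * k + 2" "2 * k + 3 = 2 * (k + 1) + 1"
    by simp_all
  show "real_of_int (cf_H v (2 * int k - 1)) = lucas_U v (k + 1)"
    "real_of_int (cf_H v (2 * int k + 1)) = lucas_U v (k + 2)"
    unfolding cf_H_def idx cf_num_sh_odd_self_reciprocal by simp_all
  show "real_of_int (cf_H v (2 * int k)) = lucas_U v (k + 2) - lucas_U v (k + 1)"
    unfolding cf_H_def idx cf_num_sh_even_self_reciprocal of_int_diff cf_num_sh_odd_self_reciprocal
    by simp
qed

end

lemma rogers_L_sums_cf_numerators:
  fixes u :: real and T :: int
  assumes u: "1 < u" and T: "u\<^sup>2 + 1 / u\<^sup>2 = of_int T" "3 \<le> T"
  shows "(\<lambda>k. rogers_L (1 / ((u + 1 / u)\<^sup>2 * (real_of_int (cf_H (u\<^sup>2) (2 * int k - 1)))\<^sup>2))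
           + rogers_L (1 / (2 * real_of_int (cf_H (u\<^sup>2) (2 * int k + 1))
                            - real_of_int (cf_H (u\<^sup>2) (2 * int k)))\<^sup>2))
         sums rogers_L (1 / u\<^sup>2)"
proof -
  have "1 / u\<^sup>2 < 1"
    using u by (simp add: one_less_power)
  then have v: "2 < u\<^sup>2"
    using T by linarith
  have "(u + 1 / u)\<^sup>2 * (real_of_int (cf_H (u\<^sup>2) (2 * int k - 1)))\<^sup>2
      = (lucas_U u (2 * (k + 1)))\<^sup>2" for k
    unfolding cf_H_self_reciprocal(1)[OF v T(1)] lucas_U_double(1)[OF u]
    by (simp add: power_mult_distrib)
  moreover have "2 * real_of_int (cf_H (u\<^sup>2) (2 * int k + 1)) - real_of_int (cf_H (u\<^sup>2) (2 * int k))
      = lucas_U u (2 * (k + 1) + 1)" for k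
    unfolding cf_H_self_reciprocal(2,3)[OF v T(1)] lucas_U_double(2)[OF u]
    by simp
  ultimately show ?thesis
    using rogers_L_lucas_sums_pairs[OF u] by (simp add: numeral_3_eq_3)
qed

section \<open>Units of norm \<open>-1\<close>\<close>

lemma negative_pell_unit:
  fixes a b n :: real
  assumes pell: "a\<^sup>2 - n * b\<^sup>2 = -1" and "0 < a" "0 < b"
  shows "1 < a + b * sqrt n" "(a + b * sqrt n) + 1 / (a + b * sqrt n) = 2 * b * sqrt n"
proof -
  have "n * b\<^sup>2 = a\<^sup>2 + 1"
    using pell by simp
  then have "0 < n * b\<^sup>2"
    using zero_le_power2[of a] by linarith
  then have "0 < n"
    using \<open>0 < b\<close> by (simp add: zero_less_mult_iff)
  then have u_pos: "0 < a + b * sqrt n"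
    using assms by (intro add_pos_pos mult_pos_pos) simp_all
  have "(a + b * sqrt n) * (b * sqrt n - a) = n * b\<^sup>2 - a\<^sup>2"
    using \<open>0 < n\<close> by (simp add: algebra_simps power2_eq_square)
  also have "\<dots> = 1"
    using pell by simp
  finally have inverse: "1 / (a + b * sqrt n) = b * sqrt n - a"
    using u_pos by (simp add: field_simps)
  then show "(a + b * sqrt n) + 1 / (a + b * sqrt n) = 2 * b * sqrt n"
    by simp
  show "1 < a + b * sqrt n"
  proof (rule ccontr)
    assume "\<not> 1 < a + b * sqrt n"
    then have "1 \<le> 1 / (a + b * sqrt n)"
      using u_pos by simp
    then show False
      unfolding inverse using \<open>\<not> 1 < a + b * sqrt n\<close> \<open>0 < a\<close> by linarith
  qed
qed

theorem theorem2:
  fixes n a b :: nat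
  assumes "n \<ge> 2"
    and "\<not> (\<exists>m::nat. m\<^sup>2 = n)"
    and "a > 0" and "b > 0"
    and "int a ^ 2 - int n * int b ^ 2 = -1"
  shows "(\<lambda>k::nat.
            rogers_L (1 / (real n * real b ^ 2 *
                        (2 * real_of_int (cf_H ((real a + real b * sqrt (real n))\<^sup>2) (2 * int k - 1)))\<^sup>2))
          + rogers_L (1 / (2 * real_of_int (cf_H ((real a + real b * sqrt (real n))\<^sup>2) (2 * int k + 1))
                          - real_of_int (cf_H ((real a + real b * sqrt (real n))\<^sup>2) (2 * int k)))\<^sup>2))
         sums rogers_L (1 / (real a + real b * sqrt (real n))\<^sup>2)"
proof -
  define u where "u = real a + real b * sqrt (real n)"
  define T where "T = 4 * int n * int b ^ 2 - 2"
  have "(real a)\<^sup>2 - real n * (real b)\<^sup>2 = -1"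
    using arg_cong[OF assms(5), of real_of_int] by simp
  then have u: "1 < u" "u + 1 / u = 2 * real b * sqrt (real n)"
    using negative_pell_unit[of "real a" "real n" "real b"] assms(3,4) by (simp_all add: u_def)
  then have u_sq: "(u + 1 / u)\<^sup>2 = 4 * real n * (real b)\<^sup>2"
    by (simp add: power_mult_distrib)
  then have T: "u\<^sup>2 + 1 / u\<^sup>2 = of_int T"
    using u(1) by (simp add: T_def power2_eq_square field_simps)
  have "2 * 1 \<le> int n * int b ^ 2"
    using assms(1,4) by (intro mult_mono) auto
  then have "3 \<le> T"
    by (simp add: T_def)
  with T have "(\<lambda>k. rogers_L (1 / ((u + 1 / u)\<^sup>2 * (real_of_int (cf_H (u\<^sup>2) (2 * int k - 1)))\<^sup>2))
           + rogers_L (1 / (2 * real_of_int (cf_H (u\<^sup>2) (2 * int k + 1))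
                            - real_of_int (cf_H (u\<^sup>2) (2 * int k)))\<^sup>2))
         sums rogers_L (1 / u\<^sup>2)"
    by (rule rogers_L_sums_cf_numerators[OF u(1)])
  moreover have "real n * real b ^ 2 * (2 * x)\<^sup>2 = (u + 1 / u)\<^sup>2 * x\<^sup>2" for x
    unfolding u_sq by (simp add: power_mult_distrib)
  ultimately show ?thesis
    by (simp only: u_def)
qed

end
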